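(* Let $y>0$ and $\mathscr{A}_n(y)=\dfrac{1}{y^2+\pi^2n^2}$, $n\in\mathbb{Z}$. Then the discrete Hilbert transform of $(\mathscr{A}_n(y))_{n\in\mathbb{Z}}$, i.e. the sequence $\frac{1}{\pi}\sum_{m\in\mathbb{Z}\setminus\{0\}}\frac{\mathscr{A}_{n-m}(y)}{m}$, is given by \[ \mathscr{B}_n(y)=\frac{\pi n\coth y}{y(y^2+\pi^2n^2)}-\frac{2\pi n}{(y^2+\pi^2n^2)^2},\qquad n\in\mathbb{Z}. \] *)

theory Defs
  imports "HOL-Analysis.Analysis"
begin

definition scrA :: "int \<Rightarrow> real \<Rightarrow> real" where
  "scrA n y = 1 / (y\<^sup>2 + pi\<^sup>2 * (real_of_int n)\<^sup>2)"

definition scrB :: "int \<Rightarrow> real \<Rightarrow> real" where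
  "scrB n y = pi * real_of_int n * (cosh y / sinh y) / (y * (y\<^sup>2 + pi\<^sup>2 * (real_of_int n)\<^sup>2))
              - 2 * pi * real_of_int n / (y\<^sup>2 + pi\<^sup>2 * (real_of_int n)\<^sup>2)\<^sup>2"

definition disc_hilbert :: "(int \<Rightarrow> real) \<Rightarrow> int \<Rightarrow> real" where
  "disc_hilbert a n = (1 / pi) * infsum (\<lambda>m. a (n - m) / real_of_int m) (UNIV - {0})"

end

theory Submission
  imports Defs
begin

text \<open>
  Write \<open>A k = 1 / (y\<^sup>2 + \<pi>\<^sup>2 k\<^sup>2)\<close> and \<open>h k = \<pi>\<^sup>2 k A k\<close>. Partial fractions give
  \<open>A (n - m) / m = A n (\<pi>\<^sup>2 n A (n - m) + 1/m - h (m - n))\<close>, so the Hilbert sum splits into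
  \<open>\<Sum>\<^sub>k A k = coth y / y\<close> (the partial fraction expansion of the cotangent at the imaginary
  point \<open>i y / \<pi>\<close>, which follows from the reflection formula for the digamma function) and
  the conditionally convergent sum of \<open>1/m - h (m - n)\<close>. The Hilbert series converges
  absolutely, so it may be summed over the windows \<open>[n - N, n + N]\<close>; there both odd functions
  \<open>1/m\<close> and \<open>h\<close> cancel up to boundary terms that tend to \<open>0\<close>, leaving only \<open>h (- n)\<close>
  from the excluded index \<open>m = 0\<close>.
\<close>

lemma Digamma_reflection:
  fixes z :: complex
  assumes "z \<notin> \<int>"
  shows "Digamma z - Digamma (1 - z) = - of_real pi * cot (of_real pi * z)"
proof -
  have z: "z \<notin> \<int>\<^sub>\<le>\<^sub>0" using assms nonpos_Ints_subset_Ints by blast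
  have z': "1 - z \<notin> \<int>\<^sub>\<le>\<^sub>0"
    using assms nonpos_Ints_subset_Ints Ints_diff[of 1 "1 - z"] by auto
  have sin_nz: "sin (of_real pi * z) \<noteq> 0"
    using z z' Gamma_reflection_complex[of z] by (auto simp: Gamma_eq_zero_iff)
  have "((\<lambda>w. Gamma w * Gamma (1 - w)) has_field_derivative
          Gamma z * Gamma (1 - z) * (Digamma z - Digamma (1 - z))) (at z)"
    using z z' by (auto intro!: derivative_eq_intros has_field_derivative_Gamma
        [THEN DERIV_chain2] simp: algebra_simps)
  moreover have "((\<lambda>w. of_real pi / sin (of_real pi * w)) has_field_derivative
          - of_real pi * of_real pi * cos (of_real pi * z) / (sin (of_real pi * z))\<^sup>2) (at z)"
    using sin_nz by (auto intro!: derivative_eq_intros simp: power2_eq_square)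
  moreover have "(\<lambda>w. Gamma w * Gamma (1 - w)) = (\<lambda>w::complex. of_real pi / sin (of_real pi * w))"
    using Gamma_reflection_complex by blast
  ultimately have "of_real pi / sin (of_real pi * z) * (Digamma z - Digamma (1 - z))
      = - of_real pi * of_real pi * cos (of_real pi * z) / (sin (of_real pi * z))\<^sup>2"
    using DERIV_unique Gamma_reflection_complex[of z] by metis
  then have "sin (of_real pi * z) / of_real pi
        * (of_real pi / sin (of_real pi * z) * (Digamma z - Digamma (1 - z)))
      = sin (of_real pi * z) / of_real pi
        * (- of_real pi * of_real pi * cos (of_real pi * z) / (sin (of_real pi * z))\<^sup>2)"
    by simp
  then show ?thesis
    using sin_nz by (simp add: cot_def power2_eq_square)
qed

lemma cot_partial_fractions:
  fixes z :: complex
  assumes "z \<notin> \<int>"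
  shows "(\<lambda>k. 2 * z / (z\<^sup>2 - (of_nat k + 1)\<^sup>2)) sums (of_real pi * cot (of_real pi * z) - 1 / z)"
proof -
  have "z \<noteq> 0" "1 - z \<noteq> 0" using assms by auto
  have series: "(\<lambda>k. (inverse (of_nat (Suc k)) - inverse (z + of_nat k))
           - (inverse (of_nat (Suc k)) - inverse ((1 - z) + of_nat k))
           - (inverse (z + of_nat (Suc k)) - inverse (z + of_nat k)))
        sums ((Digamma z + euler_mascheroni) - (Digamma (1 - z) + euler_mascheroni) - (0 - inverse z))"
  proof (rule sums_diff[OF sums_diff])
    show "(\<lambda>k. inverse (of_nat (Suc k)) - inverse (z + of_nat k)) sums (Digamma z + euler_mascheroni)"
      using summable_Digamma[OF \<open>z \<noteq> 0\<close>] by (simp add: Digamma_def summable_sums)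
    show "(\<lambda>k. inverse (of_nat (Suc k)) - inverse ((1 - z) + of_nat k))
            sums (Digamma (1 - z) + euler_mascheroni)"
      using summable_Digamma[OF \<open>1 - z \<noteq> 0\<close>] by (simp add: Digamma_def summable_sums)
    show "(\<lambda>k. inverse (z + of_nat (Suc k)) - inverse (z + of_nat k)) sums (0 - inverse z)"
    proof -
      have "(\<lambda>k. inverse (z + of_nat (Suc k)) - inverse (z + of_nat k)) sums (0 - inverse (z + of_nat 0))"
        by (intro telescope_sums filterlim_compose[OF tendsto_inverse_0]
            tendsto_add_filterlim_at_infinity[OF tendsto_const] tendsto_of_nat)
      then show ?thesis by simp
    qed
  qed
  have summand: "(inverse (of_nat (Suc k)) - inverse (z + of_nat k))
           - (inverse (of_nat (Suc k)) - inverse ((1 - z) + of_nat k))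
           - (inverse (z + of_nat (Suc k)) - inverse (z + of_nat k))
         = - (2 * z / (z\<^sup>2 - (of_nat k + 1)\<^sup>2))" for k
  proof -
    have "z \<noteq> of_int j" for j using assms by auto
    from this[of "int k + 1"] this[of "- int k - 1"]
    have "of_nat k + 1 - z \<noteq> 0" "of_nat k + 1 + z \<noteq> 0"
      by (auto simp: algebra_simps eq_neg_iff_add_eq_0)
    then have "inverse (of_nat k + 1 - z) - inverse (of_nat k + 1 + z) = 2 * z / ((of_nat k + 1)\<^sup>2 - z\<^sup>2)"
      by (simp add: field_simps power2_eq_square)
    also have "\<dots> = - (2 * z / (z\<^sup>2 - (of_nat k + 1)\<^sup>2))"
      by (simp add: divide_minus_right[symmetric])
    finally show ?thesis by (simp add: algebra_simps)
  qed
  have "(Digamma z + euler_mascheroni) - (Digamma (1 - z) + euler_mascheroni) - (0 - inverse z)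
      = - (of_real pi * cot (of_real pi * z) - 1 / z)"
    using Digamma_reflection[OF assms] by (simp add: inverse_eq_divide)
  with series[unfolded summand] have "(\<lambda>k. - (2 * z / (z\<^sup>2 - (of_nat k + 1)\<^sup>2)))
      sums (- (of_real pi * cot (of_real pi * z) - 1 / z))"
    by simp
  from sums_minus[OF this] show ?thesis by simp
qed

lemma coth_partial_fractions:
  fixes t :: real
  assumes "t \<noteq> 0"
  shows "(\<lambda>k. 2 * t / (t\<^sup>2 + (real k + 1)\<^sup>2)) sums (pi * cosh (pi * t) / sinh (pi * t) - 1 / t)"
proof -
  define z where "z = \<i> * complex_of_real t"
  have "z \<notin> \<int>"
    using assms by (auto simp: z_def elim!: Ints_cases dest!: arg_cong[where f=Im])
  have cos: "cos (\<i> * complex_of_real x) = complex_of_real (cosh x)" for x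
    using cosh_real[of x] by (simp add: cosh_def exp_minus)
  have sin: "sin (\<i> * complex_of_real x) = \<i> * complex_of_real (sinh x)" for x
    using sinh_real[of x] by (simp add: sinh_def exp_minus)
  have summand: "2 * z / (z\<^sup>2 - (of_nat k + 1)\<^sup>2)
      = - \<i> * complex_of_real (2 * t / (t\<^sup>2 + (real k + 1)\<^sup>2))" for k
  proof -
    have "z\<^sup>2 - (of_nat k + 1)\<^sup>2 = - complex_of_real (t\<^sup>2 + (real k + 1)\<^sup>2)"
      by (simp add: z_def power_mult_distrib)
    then show ?thesis
      by (simp only: divide_minus_right) (simp add: z_def)
  qed
  have "complex_of_real pi * z = \<i> * complex_of_real (pi * t)"
    by (simp add: z_def)
  then have "cot (complex_of_real pi * z) = complex_of_real (cosh (pi * t)) / (\<i> * complex_of_real (sinh (pi * t)))"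
    by (simp only: cot_def cos sin)
  moreover have "sinh (pi * t) \<noteq> 0" using assms by simp
  ultimately have limit: "complex_of_real pi * cot (complex_of_real pi * z) - 1 / z
      = - \<i> * complex_of_real (pi * cosh (pi * t) / sinh (pi * t) - 1 / t)"
    using assms by (simp add: cos sin z_def field_simps)
  have "(\<lambda>k. \<i> * (- \<i> * complex_of_real (2 * t / (t\<^sup>2 + (real k + 1)\<^sup>2))))
      sums (\<i> * (- \<i> * complex_of_real (pi * cosh (pi * t) / sinh (pi * t) - 1 / t)))"
    using sums_mult[OF cot_partial_fractions[OF \<open>z \<notin> \<int>\<close>], of \<i>] by (simp only: summand limit)
  moreover have "\<i> * (- \<i> * x) = x" for x :: complex
    by simp
  ultimately show ?thesis
    by (simp only: sums_of_real_iff)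
qed

lemma sums_scrA_positive:
  assumes "y \<noteq> 0"
  shows "(\<lambda>k. scrA (int k + 1) y) sums ((cosh y / sinh y - 1 / y) / (2 * y))"
proof -
  have "(\<lambda>k. 2 * (y / pi) / ((y / pi)\<^sup>2 + (real k + 1)\<^sup>2) / (2 * y * pi))
      sums ((pi * cosh (pi * (y / pi)) / sinh (pi * (y / pi)) - 1 / (y / pi)) / (2 * y * pi))"
    using assms by (intro sums_divide coth_partial_fractions) simp
  moreover have "2 * (y / pi) / ((y / pi)\<^sup>2 + (real k + 1)\<^sup>2) / (2 * y * pi) = scrA (int k + 1) y" for k
  proof -
    have "(y / pi)\<^sup>2 + (real k + 1)\<^sup>2 = (y\<^sup>2 + pi\<^sup>2 * (real k + 1)\<^sup>2) / pi\<^sup>2"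
      by (simp add: field_simps)
    moreover have "2 * (y / pi) / (Q / pi\<^sup>2) / (2 * y * pi) = 1 / Q" if "Q \<noteq> 0" for Q
      using that assms by (simp add: field_simps power2_eq_square)
    moreover have "y\<^sup>2 + pi\<^sup>2 * (real k + 1)\<^sup>2 \<noteq> 0"
      using assms by (simp add: add_nonneg_eq_0_iff)
    ultimately show ?thesis by (simp add: scrA_def)
  qed
  moreover have "(pi * cosh (pi * (y / pi)) / sinh (pi * (y / pi)) - 1 / (y / pi)) / (2 * y * pi)
      = (cosh y / sinh y - 1 / y) / (2 * y)"
    using assms by (simp add: field_simps)
  ultimately show ?thesis by (simp only:)
qed

lemma has_sum_even_int:
  fixes f :: "int \<Rightarrow> real"
  assumes symmetric: "\<And>k. f (- k) = f k" and nonneg: "\<And>k. f k \<ge> 0"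
    and positive_sums: "(\<lambda>k. f (int k + 1)) sums S"
  shows "(f has_sum (f 0 + 2 * S)) UNIV"
proof -
  have "(f has_sum S) {0<..}"
  proof -
    have "((\<lambda>k. f (int k + 1)) has_sum S) UNIV"
      using positive_sums nonneg by (rule sums_nonneg_imp_has_sum)
    moreover have "bij_betw (\<lambda>k. int k + 1) UNIV {0<..}"
      by (rule bij_betwI[where g="\<lambda>j. nat (j - 1)"]) auto
    ultimately show ?thesis
      using has_sum_reindex_bij_betw by blast
  qed
  moreover from this have "(f has_sum S) {..<0}"
    using has_sum_reindex_bij_betw[of uminus "{..<0}" "{0<..}" f S]
    by (simp add: symmetric bij_betw_def inj_on_def image_iff)
  ultimately have "(f has_sum (S + S)) ({0<..} \<union> {..<0})"
    by (intro has_sum_Un_disjoint) auto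
  then have "(f has_sum (f 0 + (S + S))) (insert 0 ({0<..} \<union> {..<0}))"
    by (intro has_sum_insert) auto
  moreover have "insert 0 ({0<..} \<union> {..<0}) = (UNIV :: int set)"
    by auto
  ultimately show ?thesis by simp
qed

lemma has_sum_scrA:
  assumes "y \<noteq> 0"
  shows "((\<lambda>k. scrA k y) has_sum (cosh y / sinh y / y)) UNIV"
proof -
  have "((\<lambda>k. scrA k y) has_sum (scrA 0 y + 2 * ((cosh y / sinh y - 1 / y) / (2 * y)))) UNIV"
    using sums_scrA_positive[OF assms] by (intro has_sum_even_int) (simp_all add: scrA_def)
  moreover have "scrA 0 y + 2 * ((cosh y / sinh y - 1 / y) / (2 * y)) = cosh y / sinh y / y"
    using assms by (simp add: scrA_def field_simps power2_eq_square)
  ultimately show ?thesis by simp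
qed

lemma has_sum_scrA_reflected:
  assumes "y \<noteq> 0"
  shows "((\<lambda>m. scrA (n - m) y) has_sum (cosh y / sinh y / y - scrA n y)) (UNIV - {0})"
proof -
  have bij: "bij_betw (\<lambda>m. n - m) UNIV UNIV"
    by (rule bij_betwI[where g="\<lambda>k. n - k"]) auto
  have "((\<lambda>m. scrA (n - m) y) has_sum (cosh y / sinh y / y)) UNIV"
    using has_sum_reindex_bij_betw[OF bij, of "\<lambda>k. scrA k y"] has_sum_scrA[OF assms] by simp
  from has_sum_Diff[OF this has_sum_finite[of "{0}"]] show ?thesis
    by simp
qed

lemma filterlim_window_finite_subsets:
  "filterlim (\<lambda>N. {c - int N..c + int N} \<inter> A) (finite_subsets_at_top A) sequentially"
  unfolding filterlim_finite_subsets_at_top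
proof (intro allI impI)
  fix X :: "int set"
  assume X: "finite X \<and> X \<subseteq> A"
  then have bound: "\<bar>x\<bar> \<le> (\<Sum>x\<in>X. \<bar>x\<bar>)" if "x \<in> X" for x
    using member_le_sum[of x X abs] that by auto
  show "\<forall>\<^sub>F N in sequentially. finite ({c - int N..c + int N} \<inter> A)
      \<and> X \<subseteq> {c - int N..c + int N} \<inter> A \<and> {c - int N..c + int N} \<inter> A \<subseteq> A"
    using eventually_ge_at_top[of "nat ((\<Sum>x\<in>X. \<bar>x\<bar>) + \<bar>c\<bar>)"]
  proof eventually_elim
    case (elim N)
    then have N: "(\<Sum>x\<in>X. \<bar>x\<bar>) + \<bar>c\<bar> \<le> int N"
      by (simp add: nat_le_iff)
    have "X \<subseteq> {c - int N..c + int N}"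
    proof
      fix x assume "x \<in> X"
      with bound have "\<bar>x\<bar> \<le> (\<Sum>x\<in>X. \<bar>x\<bar>)" .
      with N show "x \<in> {c - int N..c + int N}"
        unfolding atLeastAtMost_iff by arith
    qed
    then show ?case using X by auto
  qed
qed

lemma has_sum_tendsto_window:
  assumes "(f has_sum s) A"
  shows "(\<lambda>N. sum f ({c - int N..c + int N} \<inter> A)) \<longlonglongrightarrow> s"
  using filterlim_compose[OF assms[unfolded has_sum_def] filterlim_window_finite_subsets] .

lemma sum_odd_symmetric:
  fixes f :: "int \<Rightarrow> real"
  assumes odd: "\<And>j. f (- j) = - f j"
  shows "sum f {- M..M} = 0"
proof -
  have "sum f {- M..M} = sum (f \<circ> uminus) {- M..M}"
    by (subst sum.reindex[symmetric]) (auto simp: inj_on_def)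
  also have "\<dots> = - sum f {- M..M}"
    by (simp add: odd sum_negf)
  finally show ?thesis by simp
qed

lemma sum_window_shift:
  fixes f :: "int \<Rightarrow> 'a::ab_group_add"
  shows "sum f {c + 1 - int N..c + 1 + int N} = sum f {c - int N..c + int N} - f (c - int N) + f (c + 1 + int N)"
proof -
  have "{c - int N..c + 1 + int N} = insert (c + 1 + int N) {c - int N..c + int N}"
    by auto
  then have right: "sum f {c - int N..c + 1 + int N} = f (c + 1 + int N) + sum f {c - int N..c + int N}"
    by simp
  have "{c - int N..c + 1 + int N} = insert (c - int N) {c + 1 - int N..c + 1 + int N}"
    by auto
  then have left: "sum f {c - int N..c + 1 + int N} = f (c - int N) + sum f {c + 1 - int N..c + 1 + int N}"
    by simp
  from left right show ?thesis
    by (simp add: algebra_simps)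
qed

lemma tendsto_window_sum_odd:
  fixes f :: "int \<Rightarrow> real"
  assumes odd: "\<And>j. f (- j) = - f j"
    and tail: "\<And>c. (\<lambda>N. f (c + int N)) \<longlonglongrightarrow> 0"
  shows "(\<lambda>N. sum f {c - int N..c + int N}) \<longlonglongrightarrow> 0"
proof -
  have tail': "(\<lambda>N. f (c - int N)) \<longlonglongrightarrow> 0" for c
  proof -
    have "f (c - int N) = - f (- c + int N)" for N
      using odd[of "- c + int N"] by simp
    then show ?thesis
      using tendsto_minus[OF tail[of "- c"]] by simp
  qed
  show ?thesis
  proof (induction c rule: int_induct[where k = 0])
    case base
    show ?case using sum_odd_symmetric[of f, OF odd] by simp
  next
    case (step1 c)
    have "(\<lambda>N. sum f {c - int N..c + int N} - f (c - int N) + f (c + 1 + int N)) \<longlonglongrightarrow> 0 - 0 + 0"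
      by (intro tendsto_intros step1(2) tail' tail)
    then show ?case
      unfolding sum_window_shift by simp
  next
    case (step2 c)
    have "sum f {c - 1 - int N..c - 1 + int N}
        = sum f {c - int N..c + int N} + f (c - 1 - int N) - f (c + int N)" for N
      using sum_window_shift[of f "c - 1" N] by simp
    moreover have "(\<lambda>N. sum f {c - int N..c + int N} + f (c - 1 - int N) - f (c + int N)) \<longlonglongrightarrow> 0 + 0 - 0"
      by (intro tendsto_intros step2(2) tail' tail)
    ultimately show ?case by simp
  qed
qed

lemma tendsto_window_sum_inverse:
  "(\<lambda>N. \<Sum>m\<in>{c - int N..c + int N}. 1 / real_of_int m) \<longlonglongrightarrow> 0"
proof (rule tendsto_window_sum_odd)
  fix c :: int
  have "filterlim (\<lambda>N. real_of_int c + real N) at_top sequentially"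
    by (rule filterlim_tendsto_add_at_top[OF tendsto_const filterlim_real_sequentially])
  then show "(\<lambda>N. 1 / real_of_int (c + int N)) \<longlonglongrightarrow> 0"
    by (simp add: tendsto_divide_0[OF tendsto_const] filterlim_at_top_imp_at_infinity)
qed simp

lemma tendsto_punctured_window_sum:
  fixes g :: "int \<Rightarrow> real"
  assumes odd: "\<And>j. g (- j) = - g j"
  shows "(\<lambda>N. \<Sum>m\<in>{n - int N..n + int N} - {0}. 1 / real_of_int m - g (m - n)) \<longlonglongrightarrow> g (- n)"
proof -
  have shifted_sum: "(\<Sum>m\<in>{n - int N..n + int N}. g (m - n)) = 0" for N
  proof -
    have "(\<Sum>m\<in>{n - int N..n + int N}. g (m - n)) = (\<Sum>j\<in>{- int N..int N}. g j)"
      using sum.reindex[of "plus n" "{- int N..int N}" "\<lambda>m. g (m - n)"]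
      by (simp add: algebra_simps)
    also have "\<dots> = 0"
      by (rule sum_odd_symmetric[of g, OF odd])
    finally show ?thesis .
  qed
  \<comment> \<open>Once the window contains \<open>0\<close>, removing it adds \<open>g (- n)\<close>, because \<open>1 / 0 = 0\<close>.\<close>
  have "\<forall>\<^sub>F N in sequentially. (\<Sum>m\<in>{n - int N..n + int N}. 1 / real_of_int m) + g (- n)
      = (\<Sum>m\<in>{n - int N..n + int N} - {0}. 1 / real_of_int m - g (m - n))"
    using eventually_ge_at_top[of "nat \<bar>n\<bar>"]
  proof eventually_elim
    case (elim N)
    then have "0 \<in> {n - int N..n + int N}" by auto
    then show ?case
      by (simp add: sum_diff1 sum_subtractf shifted_sum)
  qed
  moreover have "(\<lambda>N. (\<Sum>m\<in>{n - int N..n + int N}. 1 / real_of_int m) + g (- n)) \<longlonglongrightarrow> 0 + g (- n)"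
    by (intro tendsto_add tendsto_window_sum_inverse tendsto_const)
  ultimately show ?thesis
    by (simp add: Lim_transform_eventually)
qed

lemma scrA_div_partial_fractions:
  fixes n m :: int
  assumes "y \<noteq> 0" "m \<noteq> 0"
  shows "scrA (n - m) y / real_of_int m
    = (pi\<^sup>2 * real_of_int n * scrA (n - m) y
        + (1 / real_of_int m - pi\<^sup>2 * real_of_int (m - n) * scrA (m - n) y))
      / (y\<^sup>2 + pi\<^sup>2 * (real_of_int n)\<^sup>2)"
proof -
  define Q where "Q = y\<^sup>2 + pi\<^sup>2 * (real_of_int n - real_of_int m)\<^sup>2"
  define D where "D = y\<^sup>2 + pi\<^sup>2 * (real_of_int n)\<^sup>2"
  have "Q > 0" "D > 0"
    using assms by (auto simp: Q_def D_def intro: add_pos_nonneg)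
  have A: "scrA (n - m) y = 1 / Q" "scrA (m - n) y = 1 / Q"
    by (simp_all add: scrA_def Q_def power2_commute)
  have D: "D = Q + pi\<^sup>2 * (2 * real_of_int n - real_of_int m) * real_of_int m"
    by (simp add: Q_def D_def power2_eq_square algebra_simps)
  have "pi\<^sup>2 * real_of_int n * (1 / Q) + (1 / real_of_int m - pi\<^sup>2 * real_of_int (m - n) * (1 / Q))
      = D / (Q * real_of_int m)"
    using \<open>Q > 0\<close> assms(2) unfolding D by (simp add: field_simps)
  then show ?thesis
    using \<open>D > 0\<close> unfolding A D_def[symmetric] by simp
qed

lemma summable_on_scrA_div:
  assumes "y \<noteq> 0"
  shows "(\<lambda>m. scrA (n - m) y / real_of_int m) summable_on (UNIV - {0})"
proof -
  have "norm (scrA (n - m) y / real_of_int m) \<le> scrA (n - m) y" if "m \<in> UNIV - {0}" for m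
  proof -
    have "1 \<le> \<bar>m\<bar>" using that by (cases "0 < m") auto
    then have "1 \<le> \<bar>real_of_int m\<bar>"
      by (metis of_int_1_le_iff of_int_abs)
    then have "\<bar>scrA (n - m) y\<bar> / \<bar>real_of_int m\<bar> \<le> \<bar>scrA (n - m) y\<bar> / 1"
      by (intro divide_left_mono) auto
    moreover have "scrA (n - m) y \<ge> 0" by (simp add: scrA_def)
    ultimately show ?thesis by (simp add: abs_divide)
  qed
  then have "(\<lambda>m. norm (scrA (n - m) y / real_of_int m)) summable_on (UNIV - {0})"
    using has_sum_imp_summable[OF has_sum_scrA_reflected[OF assms]]
    by (rule Infinite_Sum.abs_summable_on_comparison_test'[rotated])
  then show ?thesis
    by (rule summable_on_iff_abs_summable_on_real[THEN iffD2])
qed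

lemma tendsto_window_sum_scrA_div:
  assumes "y \<noteq> 0"
  shows "(\<lambda>N. \<Sum>m\<in>{n - int N..n + int N} \<inter> (UNIV - {0}). scrA (n - m) y / real_of_int m)
    \<longlonglongrightarrow> pi * scrB n y"
proof -
  define D where "D = y\<^sup>2 + pi\<^sup>2 * (real_of_int n)\<^sup>2"
  define g where "g j = pi\<^sup>2 * real_of_int j * scrA j y" for j
  define W where "W N = {n - int N..n + int N} \<inter> (UNIV - {0})" for N
  have "D > 0"
    using assms by (auto simp: D_def intro: add_pos_nonneg)
  have window_sum: "(\<Sum>m\<in>W N. scrA (n - m) y / real_of_int m)
      = (pi\<^sup>2 * real_of_int n * (\<Sum>m\<in>W N. scrA (n - m) y)
         + (\<Sum>m\<in>W N. 1 / real_of_int m - g (m - n))) / D" for N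
  proof -
    have "(\<Sum>m\<in>W N. scrA (n - m) y / real_of_int m) = (\<Sum>m\<in>W N.
        (pi\<^sup>2 * real_of_int n * scrA (n - m) y + (1 / real_of_int m - g (m - n))) / D)"
      by (rule sum.cong) (auto simp: W_def D_def g_def scrA_div_partial_fractions[OF assms])
    then show ?thesis
      by (simp add: sum_divide_distrib[symmetric] sum.distrib sum_distrib_left)
  qed
  have "g (- j) = - g j" for j
    by (simp add: g_def scrA_def)
  moreover have "W N = {n - int N..n + int N} - {0}" for N
    unfolding W_def by blast
  ultimately have "(\<lambda>N. \<Sum>m\<in>W N. 1 / real_of_int m - g (m - n)) \<longlonglongrightarrow> g (- n)"
    using tendsto_punctured_window_sum[of g n] by presburger
  moreover note has_sum_tendsto_window[OF has_sum_scrA_reflected[OF assms, of n], of n, folded W_def]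
  ultimately have "(\<lambda>N. \<Sum>m\<in>W N. scrA (n - m) y / real_of_int m)
      \<longlonglongrightarrow> (pi\<^sup>2 * real_of_int n * (cosh y / sinh y / y - scrA n y) + g (- n)) / D"
    unfolding window_sum using \<open>D > 0\<close> by (intro tendsto_intros) auto
  moreover have "(pi\<^sup>2 * real_of_int n * (cosh y / sinh y / y - scrA n y) + g (- n)) / D = pi * scrB n y"
  proof -
    have closed_forms: "scrA n y = 1 / D" "g (- n) = - pi\<^sup>2 * real_of_int n / D"
      "scrB n y = pi * real_of_int n * (cosh y / sinh y) / (y * D) - 2 * pi * real_of_int n / D\<^sup>2"
      by (simp_all add: scrA_def g_def scrB_def D_def)
    show ?thesis
      unfolding closed_forms using assms \<open>D > 0\<close> by (simp add: field_simps power2_eq_square)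
  qed
  ultimately show ?thesis
    unfolding W_def by simp
qed

lemma has_sum_scrA_hilbert:
  assumes "y \<noteq> 0"
  shows "((\<lambda>m. scrA (n - m) y / real_of_int m) has_sum (pi * scrB n y)) (UNIV - {0})"
proof -
  note summable = summable_on_scrA_div[OF assms, of n]
  have "(\<lambda>N. \<Sum>m\<in>{n - int N..n + int N} \<inter> (UNIV - {0}). scrA (n - m) y / real_of_int m)
      \<longlonglongrightarrow> infsum (\<lambda>m. scrA (n - m) y / real_of_int m) (UNIV - {0})"
    by (rule has_sum_tendsto_window[OF has_sum_infsum[OF summable]])
  with tendsto_window_sum_scrA_div[OF assms]
  have "infsum (\<lambda>m. scrA (n - m) y / real_of_int m) (UNIV - {0}) = pi * scrB n y"
    using LIMSEQ_unique by blast
  with summable show ?thesis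
    by (simp add: has_sum_iff)
qed

theorem lemma3p13:
  fixes y :: real
  assumes "y > 0"
  shows "\<forall>n::int. (\<lambda>m. scrA (n - m) y / real_of_int m) summable_on (UNIV - {0})
           \<and> disc_hilbert (\<lambda>k. scrA k y) n = scrB n y"
  using has_sum_scrA_hilbert[of y] assms by (simp add: has_sum_iff disc_hilbert_def)

end
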